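(* (i) If $\omega$ is a standard Gaussian random variable, then $\mathbb P(|\omega|\ge x)\le \frac{2\exp(-x^2/2)}{\sqrt{2\pi}\,x}$ for all $x>0$. (ii) Let $0\le k<j$ be integers and let $\xi=(\xi_0,\dots,\xi_{2^j-1})$ be a vector of independent standard normal random variables. Let $\xi^*=(\xi^*_1,\dots,\xi^*_{2^j})$ be the non-increasing rearrangement of $(|\xi_0|,\dots,|\xi_{2^j-1}|)$. Then for every $K\ge1$, $$\mathbb P\big(\xi^*_{2^k}\ge K\sqrt{j-k}\big)\le\big(2e^{-K^2/2}\big)^{(j-k)2^k}\cdot e^{2^k}.$$ *)

theory Defs
  imports "HOL-Probability.Probability"
begin

text \<open>Non-increasing rearrangement of the finite family (a 0, ..., a (n-1)),
  indexed from 1: nonincr_rearr a n m is the m-th largest entry (with multiplicity),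
  for 1 <= m <= n.\<close>
definition nonincr_rearr :: "(nat \<Rightarrow> real) \<Rightarrow> nat \<Rightarrow> nat \<Rightarrow> real" where
  "nonincr_rearr a n m = rev (sort (map a [0..<n])) ! (m - 1)"

end

theory Submission
  imports Defs "HOL-Real_Asymp.Real_Asymp"
begin

text \<open>(i) is the Mills-ratio bound: on \<open>[x, \<infinity>)\<close> the density is dominated by
  \<open>y \<phi>(y) / x\<close>, whose integral is \<open>\<phi>(x) / x\<close> because \<open>-\<phi>\<close> is an antiderivative of
  \<open>y \<phi>(y)\<close>; symmetry doubles it.
  (ii) If the \<open>2^k\<close>-th largest of the \<open>|\<xi>\<^sub>i|\<close> is at least \<open>T = K \<surd>(j - k)\<close>, then some
  \<open>2^k\<close> of the independent events \<open>|\<xi>\<^sub>i| \<ge> T\<close> occur simultaneously. A union bound over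
  the \<open>(2^j choose 2^k) \<le> (e 2^(j-k))^(2^k)\<close> choices of these events, each choice having
  probability at most \<open>exp (-T\<^sup>2/2)^(2^k)\<close> by (i) (as \<open>T \<ge> 1\<close>), gives the bound.\<close>

lemma std_normal_density_minus [simp]: "std_normal_density (- x) = std_normal_density x"
  by (simp add: std_normal_density_def)

lemma nn_integral_lborel_reflect:
  fixes f :: "real \<Rightarrow> ennreal"
  assumes "f \<in> borel_measurable borel"
  shows "(\<integral>\<^sup>+x. f (- x) \<partial>lborel) = (\<integral>\<^sup>+x. f x \<partial>lborel)"
  using nn_integral_real_affine[OF assms, of "-1" 0] by simp

lemma nn_integral_std_normal_upper_tail_le:
  fixes x :: real
  assumes "x > 0"
  shows "(\<integral>\<^sup>+y. ennreal (std_normal_density y) * indicator {x..} y \<partial>lborel)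
    \<le> std_normal_density x / x"
proof -
  have "(\<integral>\<^sup>+y. ennreal (std_normal_density y) * indicator {x..} y \<partial>lborel)
      \<le> (\<integral>\<^sup>+y. ennreal (y * std_normal_density y / x) * indicator {x..} y \<partial>lborel)"
  proof (intro nn_integral_mono)
    fix y :: real
    have "x \<le> y \<Longrightarrow> std_normal_density y \<le> y * std_normal_density y / x"
      using assms by (simp add: field_simps mult_right_mono)
    then show "ennreal (std_normal_density y) * indicator {x..} y
        \<le> ennreal (y * std_normal_density y / x) * indicator {x..} y"
      by (auto simp: indicator_def intro: ennreal_leI)
  qed
  also have "\<dots> = ennreal (0 - (- std_normal_density x / x))"
  proof (rule nn_integral_FTC_atLeast[where F = "\<lambda>y. - std_normal_density y / x"])
    show "((\<lambda>y. - std_normal_density y / x) has_real_derivative y * std_normal_density y / x) (at y)"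
      if "x \<le> y" for y
      unfolding std_normal_density_def using assms
      by (auto intro!: derivative_eq_intros simp: field_simps power2_eq_square)
    have "(std_normal_density \<longlongrightarrow> 0) at_top"
      unfolding std_normal_density_def by real_asymp
    then show "((\<lambda>y. - std_normal_density y / x) \<longlongrightarrow> 0) at_top"
      using assms by (auto intro!: tendsto_eq_intros)
  qed (use assms in auto)
  finally show ?thesis by simp
qed

lemma nn_integral_std_normal_abs_tail_le:
  fixes x :: real
  assumes "x > 0"
  shows "(\<integral>\<^sup>+y. ennreal (std_normal_density y) * indicator {y. x \<le> \<bar>y\<bar>} y \<partial>lborel)
    \<le> 2 * exp (- x\<^sup>2 / 2) / (sqrt (2 * pi) * x)"
proof -
  let ?upper = "\<lambda>y. ennreal (std_normal_density y) * indicator {x..} y"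
  have "ennreal (std_normal_density y) * indicator {y. x \<le> \<bar>y\<bar>} y = ?upper y + ?upper (- y)" for y
    using assms by (auto simp: indicator_def)
  then have "(\<integral>\<^sup>+y. ennreal (std_normal_density y) * indicator {y. x \<le> \<bar>y\<bar>} y \<partial>lborel)
      = (\<integral>\<^sup>+y. ?upper y \<partial>lborel) + (\<integral>\<^sup>+y. ?upper (- y) \<partial>lborel)"
    by (simp add: nn_integral_add)
  also have "\<dots> = 2 * (\<integral>\<^sup>+y. ?upper y \<partial>lborel)"
    by (subst nn_integral_lborel_reflect) (auto simp: mult_2)
  also have "\<dots> \<le> 2 * ennreal (std_normal_density x / x)"
    using nn_integral_std_normal_upper_tail_le[OF assms] by (intro mult_left_mono) auto
  also have "\<dots> = ennreal (2 * (std_normal_density x / x))"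
    by (subst ennreal_mult') auto
  also have "\<dots> = 2 * exp (- x\<^sup>2 / 2) / (sqrt (2 * pi) * x)"
    by (simp add: std_normal_density_def)
  finally show ?thesis .
qed

lemma std_normal_abs_tail_le:
  fixes x :: real
  assumes "distributed M lborel \<omega> (\<lambda>y. ennreal (std_normal_density y))" and "x > 0"
  shows "measure M {s \<in> space M. \<bar>\<omega> s\<bar> \<ge> x} \<le> 2 * exp (- x\<^sup>2 / 2) / (sqrt (2 * pi) * x)"
proof -
  have "{s \<in> space M. \<bar>\<omega> s\<bar> \<ge> x} = \<omega> -` {y. x \<le> \<bar>y\<bar>} \<inter> space M"
    by auto
  then have "emeasure M {s \<in> space M. \<bar>\<omega> s\<bar> \<ge> x}
      = (\<integral>\<^sup>+y. ennreal (std_normal_density y) * indicator {y. x \<le> \<bar>y\<bar>} y \<partial>lborel)"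
    using distributed_emeasure[OF assms(1), of "{y. x \<le> \<bar>y\<bar>}"] by simp
  then show ?thesis
    unfolding measure_def using assms(2) nn_integral_std_normal_abs_tail_le[of x]
    by (intro enn2real_leI) auto
qed

lemma std_normal_abs_tail_le_exp:
  fixes x :: real
  assumes "distributed M lborel \<omega> (\<lambda>y. ennreal (std_normal_density y))" and "x \<ge> 1"
  shows "measure M {s \<in> space M. \<bar>\<omega> s\<bar> \<ge> x} \<le> exp (- x\<^sup>2 / 2)"
proof -
  have "2 * 1 \<le> sqrt (2 * pi) * x"
    using pi_gt3 assms(2) by (intro mult_mono) (auto simp: real_le_rsqrt)
  then have "2 * exp (- x\<^sup>2 / 2) / (sqrt (2 * pi) * x) \<le> exp (- x\<^sup>2 / 2)"
    by (simp add: field_simps)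
  moreover have "measure M {s \<in> space M. \<bar>\<omega> s\<bar> \<ge> x} \<le> 2 * exp (- x\<^sup>2 / 2) / (sqrt (2 * pi) * x)"
    using std_normal_abs_tail_le[OF assms(1)] assms(2) by simp
  ultimately show ?thesis
    by linarith
qed

lemma le_nonincr_rearr_imp_card_ge:
  assumes "1 \<le> m" "m \<le> n" "T \<le> nonincr_rearr a n m"
  shows "m \<le> card {i \<in> {..<n}. T \<le> a i}"
proof -
  define xs where "xs = sort (map a [0..<n])"
  have len: "length xs = n"
    by (simp add: xs_def)
  have "T \<le> xs ! (n - 1 - i)" if "i < m" for i
  proof -
    have "xs ! (n - m) \<le> xs ! (n - 1 - i)"
      using that assms len by (intro sorted_nth_mono) (auto simp: xs_def)
    moreover have "T \<le> xs ! (n - m)"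
      using assms len by (simp add: nonincr_rearr_def xs_def rev_nth)
    ultimately show ?thesis by linarith
  qed
  then have "(\<lambda>i. n - 1 - i) ` {..<m} \<subseteq> {i. i < length xs \<and> T \<le> xs ! i}"
    using assms len by auto
  moreover have "inj_on (\<lambda>i. n - 1 - i) {..<m}"
    using assms by (auto simp: inj_on_def)
  ultimately have "m \<le> card {i. i < length xs \<and> T \<le> xs ! i}"
    using card_mono[of _ "(\<lambda>i. n - 1 - i) ` {..<m}"] by (simp add: card_image)
  also have "\<dots> = length (filter (\<lambda>v. T \<le> v) xs)"
    by (simp add: length_filter_conv_card)
  also have "\<dots> = card {i \<in> {..<n}. T \<le> a i}"
    by (simp add: xs_def filter_sort length_filter_conv_card) (intro arg_cong[where f=card]; auto)
  finally show ?thesis .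
qed

lemma power_div_fact_le_exp:
  fixes x :: real
  assumes "0 \<le> x"
  shows "x ^ n / fact n \<le> exp x"
proof -
  have "(\<lambda>k. x ^ k /\<^sub>R fact k) sums exp x"
    by (rule exp_converges)
  moreover have "(\<Sum>k\<in>{n}. x ^ k /\<^sub>R fact k) \<le> (\<Sum>k. x ^ k /\<^sub>R fact k)"
    using calculation assms by (intro sum_le_suminf) (auto simp: sums_iff)
  ultimately show ?thesis
    by (simp add: sums_iff divide_inverse mult.commute)
qed

lemma binomial_le_exp_ratio_pow: "real (n choose m) \<le> (exp 1 * real n / real m) ^ m"
proof (cases "m = 0")
  case False
  have "real (n choose m) * fact m \<le> real n ^ m"
    by (metis binomial_fact_pow of_nat_fact of_nat_le_iff of_nat_mult of_nat_power)
  then have "real (n choose m) \<le> real n ^ m / fact m"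
    by (simp add: field_simps)
  also have "\<dots> = (real n / real m) ^ m * (real m ^ m / fact m)"
    using False by (simp add: power_divide)
  also have "\<dots> \<le> (real n / real m) ^ m * exp (real m)"
    by (intro mult_left_mono power_div_fact_le_exp) auto
  also have "\<dots> = (exp 1 * real n / real m) ^ m"
    by (simp add: power_divide power_mult_distrib exp_of_nat_mult[symmetric])
  finally show ?thesis .
qed simp

lemma Collect_card_ge_subset_UN_INT:
  assumes "finite I"
  shows "{s. m \<le> card {i \<in> I. s \<in> A i}} \<subseteq> (\<Union>S\<in>{S. S \<subseteq> I \<and> card S = m}. \<Inter>i\<in>S. A i)"
proof
  fix s assume "s \<in> {s. m \<le> card {i \<in> I. s \<in> A i}}"
  then obtain S where "S \<subseteq> {i \<in> I. s \<in> A i}" "card S = m"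
    by (auto elim: obtain_subset_with_card_n)
  then show "s \<in> (\<Union>S\<in>{S. S \<subseteq> I \<and> card S = m}. \<Inter>i\<in>S. A i)"
    by blast
qed

lemma (in prob_space) prob_card_indep_events_ge_le:
  assumes indep: "indep_events A I" and "finite I" and "0 < m"
    and E: "E \<subseteq> {s. m \<le> card {i \<in> I. s \<in> A i}}"
    and q: "\<And>i. i \<in> I \<Longrightarrow> prob (A i) \<le> q"
  shows "prob E \<le> real (card I choose m) * q ^ m"
proof -
  define Ss where "Ss = {S. S \<subseteq> I \<and> card S = m}"
  have "finite Ss"
    using \<open>finite I\<close> by (auto simp: Ss_def intro: finite_subset[of _ "Pow I"])
  have S: "S \<subseteq> I" "finite S" "S \<noteq> {}" "card S = m" if "S \<in> Ss" for S
    using that \<open>finite I\<close> \<open>0 < m\<close> by (auto simp: Ss_def intro: finite_subset)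
  have A_events: "A i \<in> events" if "i \<in> I" for i
    using indep that by (auto simp: indep_events_def)
  have INT_events: "(\<Inter>i\<in>S. A i) \<in> events" if "S \<in> Ss" for S
    using S[OF that] A_events by (intro sets.finite_INT) auto
  have INT_le: "prob (\<Inter>i\<in>S. A i) \<le> q ^ m" if "S \<in> Ss" for S
  proof -
    have "prob (\<Inter>i\<in>S. A i) = (\<Prod>i\<in>S. prob (A i))"
      using indep S[OF that] by (auto simp: indep_events_def)
    also have "\<dots> \<le> (\<Prod>i\<in>S. q)"
      using S[OF that] q by (intro prod_mono) auto
    finally show ?thesis
      using S[OF that] by simp
  qed
  have "E \<subseteq> (\<Union>S\<in>Ss. \<Inter>i\<in>S. A i)"
    using subset_trans[OF E Collect_card_ge_subset_UN_INT[OF \<open>finite I\<close>]] by (simp add: Ss_def)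
  then have "prob E \<le> prob (\<Union>S\<in>Ss. \<Inter>i\<in>S. A i)"
    using \<open>finite Ss\<close> INT_events by (intro finite_measure_mono) auto
  also have "\<dots> \<le> (\<Sum>S\<in>Ss. prob (\<Inter>i\<in>S. A i))"
    using \<open>finite Ss\<close> INT_events by (intro measure_subadditive_finite) auto
  also have "\<dots> \<le> (\<Sum>S\<in>Ss. q ^ m)"
    using INT_le by (intro sum_mono)
  also have "\<dots> = real (card I choose m) * q ^ m"
    using n_subsets[OF \<open>finite I\<close>] by (simp add: Ss_def)
  finally show ?thesis .
qed

lemma (in prob_space) prob_nonincr_rearr_abs_std_normal_ge_le:
  fixes \<xi> :: "nat \<Rightarrow> 'a \<Rightarrow> real"
  assumes "k < j" and indep: "indep_vars (\<lambda>_. borel) \<xi> {..<2^j}"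
    and gauss: "\<And>i. i < 2^j \<Longrightarrow> distributed M lborel (\<xi> i) (\<lambda>x. ennreal (std_normal_density x))"
    and "K \<ge> 1"
  shows "prob {s \<in> space M. nonincr_rearr (\<lambda>i. \<bar>\<xi> i s\<bar>) (2^j) (2^k) \<ge> K * sqrt (real j - real k)}
    \<le> (2 * exp (- K\<^sup>2 / 2)) ^ ((j - k) * 2^k) * exp (2^k)"
proof -
  define d where "d = j - k"
  define m :: nat where "m = 2^k"
  define T where "T = K * sqrt (real d)"
  have j_k: "real j - real k = real d" and n: "2^j = 2^d * m"
    using \<open>k < j\<close> by (simp_all add: d_def m_def flip: power_add)
  have "0 < m" "m \<le> 2^j"
    using \<open>k < j\<close> by (auto simp: m_def)
  have "1 \<le> sqrt (real d)"
    using \<open>k < j\<close> by (simp add: d_def)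
  then have "1 \<le> T"
    using \<open>K \<ge> 1\<close> unfolding T_def by (metis mult_mono' mult_1 order_trans zero_le_one)
  define A where "A i = {s \<in> space M. T \<le> \<bar>\<xi> i s\<bar>}" for i
  have "indep_events A {..<2^j}"
    unfolding A_def by (intro indep_eventsI_indep_vars[OF indep]) measurable
  moreover have "prob (A i) \<le> exp (- T\<^sup>2 / 2)" if "i < 2^j" for i
    unfolding A_def using std_normal_abs_tail_le_exp[OF gauss[OF that] \<open>1 \<le> T\<close>] by simp
  moreover have "{s \<in> space M. nonincr_rearr (\<lambda>i. \<bar>\<xi> i s\<bar>) (2^j) (2^k) \<ge> K * sqrt (real j - real k)}
      \<subseteq> {s. m \<le> card {i \<in> {..<2^j}. s \<in> A i}}"
    using le_nonincr_rearr_imp_card_ge[of m "2^j" T] \<open>0 < m\<close> \<open>m \<le> 2^j\<close>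
    by (auto simp: A_def T_def j_k m_def)
  ultimately have "prob {s \<in> space M. nonincr_rearr (\<lambda>i. \<bar>\<xi> i s\<bar>) (2^j) (2^k) \<ge> K * sqrt (real j - real k)}
      \<le> real (2^j choose m) * exp (- T\<^sup>2 / 2) ^ m"
    using \<open>0 < m\<close> by (subst card_lessThan[symmetric], intro prob_card_indep_events_ge_le) auto
  also have "\<dots> \<le> (exp 1 * 2^d) ^ m * exp (- T\<^sup>2 / 2) ^ m"
    using binomial_le_exp_ratio_pow[of "2^j" m] \<open>0 < m\<close> by (intro mult_right_mono) (auto simp: n)
  also have "\<dots> = (2 * exp (- K\<^sup>2 / 2)) ^ (d * m) * exp m"
  proof -
    have "exp (- T\<^sup>2 / 2) = exp (- K\<^sup>2 / 2) ^ d"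
      by (simp add: T_def power_mult_distrib exp_of_nat_mult[symmetric] field_simps)
    then show ?thesis
      by (simp add: power_mult_distrib power_mult exp_of_nat_mult[symmetric] mult.commute)
  qed
  finally show ?thesis
    by (simp add: d_def m_def)
qed

theorem lemma4p3:
  fixes M :: "'a measure"
  assumes "prob_space M"
  shows
  "(\<forall>\<omega> :: 'a \<Rightarrow> real.
       distributed M lborel \<omega> (\<lambda>x. ennreal (std_normal_density x)) \<longrightarrow>
       (\<forall>x::real. x > 0 \<longrightarrow>
          measure M {s \<in> space M. \<bar>\<omega> s\<bar> \<ge> x}
            \<le> 2 * exp (- x\<^sup>2 / 2) / (sqrt (2 * pi) * x)))
   \<and>
   (\<forall>(k::nat) (j::nat) (\<xi> :: nat \<Rightarrow> 'a \<Rightarrow> real) (K::real).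
       k < j \<longrightarrow>
       prob_space.indep_vars M (\<lambda>_. borel) \<xi> {..<2^j} \<longrightarrow>
       (\<forall>i<2^j. distributed M lborel (\<xi> i) (\<lambda>x. ennreal (std_normal_density x))) \<longrightarrow>
       K \<ge> 1 \<longrightarrow>
       measure M {s \<in> space M.
           nonincr_rearr (\<lambda>i. \<bar>\<xi> i s\<bar>) (2^j) (2^k) \<ge> K * sqrt (real j - real k)}
         \<le> (2 * exp (- K\<^sup>2 / 2)) ^ ((j - k) * 2^k) * exp (2^k))"
proof -
  interpret prob_space M
    by fact
  show ?thesis
    by (intro conjI allI impI std_normal_abs_tail_le prob_nonincr_rearr_abs_std_normal_ge_le) auto
qed

end
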